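(* Let $D_1\supset D_2\supset D_3\supset\cdots$ be closed topological disks in $\mathbb{R}^2$ and let $\varepsilon>0$. Then there exists $N$ such that whenever $n\ge N$ and $U$ is a component of $D_n\setminus D_{n+1}$, $U$ is $\varepsilon$ thin.
   Context: A set $U\subset\mathbb{R}^2$ is $\varepsilon$ thin if for every $x\in U$ the open round disk $B(x,\varepsilon)$ meets $\mathbb{R}^2\setminus U$. *)

theory Defs
  imports "HOL-Analysis.Analysis"
begin

definition closed_top_disk :: "(real^2) set \<Rightarrow> bool" where
  "closed_top_disk D \<longleftrightarrow> D homeomorphic cball (0::real^2) 1"

definition eps_thin :: "real \<Rightarrow> (real^2) set \<Rightarrow> bool" where
  "eps_thin e U \<longleftrightarrow> (\<forall>x\<in>U. ball x e \<inter> (UNIV - U) \<noteq> {})"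

end

theory Submission
  imports Defs
begin

text \<open>If a ball of radius \<open>e\<close> lies in \<open>D\<^sub>n - D\<^sub>n\<^sub>+\<^sub>1\<close> and another one in
  \<open>D\<^sub>m - D\<^sub>m\<^sub>+\<^sub>1\<close> with \<open>n < m\<close>, the second centre lies in \<open>D\<^sub>n\<^sub>+\<^sub>1\<close>, which the first ball
  avoids; so the centres are \<open>e\<close>-separated. A bounded set contains only finitely many
  \<open>e\<close>-separated points, hence only finitely many of these differences contain an \<open>e\<close>-ball,
  and every component of a difference containing no \<open>e\<close>-ball is \<open>e\<close>-thin.\<close>

lemma finite_if_separated_in_bounded:
  fixes S :: "'a::heine_borel set"
  assumes "bounded S" and "e > 0"
    and separated: "\<And>x y. x \<in> S \<Longrightarrow> y \<in> S \<Longrightarrow> x \<noteq> y \<Longrightarrow> e \<le> dist x y"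
  shows "finite S"
proof (rule ccontr)
  assume "infinite S"
  then obtain z where "z islimpt S"
    using \<open>bounded S\<close> bounded_infinite_imp_islimpt by blast
  then have "infinite (S \<inter> ball z (e/2))"
    using \<open>e > 0\<close> by (simp add: islimpt_eq_infinite_ball)
  then obtain x y where "x \<in> S \<inter> ball z (e/2)" "y \<in> S \<inter> ball z (e/2)" "x \<noteq> y"
    by (metis finite.emptyI finite_insert finite_subset infinite_imp_nonempty insert_iff subsetI)
  moreover from this have "dist x y < e"
    using dist_triangle_half_l[of x z e y] by (simp add: dist_commute)
  ultimately show False
    using separated by fastforce
qed

lemma finite_differences_containing_ball:
  fixes D :: "nat \<Rightarrow> 'a::heine_borel set"
  assumes "decseq D" and "bounded (D 0)" and "e > 0"
  shows "finite {n. \<exists>x. ball x e \<subseteq> D n - D (Suc n)}" (is "finite ?B")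
proof -
  define p where "p n = (SOME x. ball x e \<subseteq> D n - D (Suc n))" for n
  have p: "ball (p n) e \<subseteq> D n - D (Suc n)" if "n \<in> ?B" for n
  proof -
    from that obtain x where "ball x e \<subseteq> D n - D (Suc n)"
      by blast
    then show ?thesis
      unfolding p_def by (rule someI)
  qed
  have p_mem: "p n \<in> D n - D (Suc n)" if "n \<in> ?B" for n
    using p[OF that] \<open>e > 0\<close> centre_in_ball by blast
  have separated: "e \<le> dist (p n) (p m)" if "n \<in> ?B" "m \<in> ?B" "n < m" for n m
  proof -
    have "p m \<in> D (Suc n)"
      using p_mem[OF that(2)] decseqD[OF \<open>decseq D\<close>, of "Suc n" m] \<open>n < m\<close> by auto
    then have "p m \<notin> ball (p n) e"
      using p[OF that(1)] by blast
    then show ?thesis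
      by (simp add: not_less)
  qed
  then have separated': "e \<le> dist (p n) (p m)" if "n \<in> ?B" "m \<in> ?B" "n \<noteq> m" for n m
    using that separated[of n m] separated[of m n] by (cases "n < m") (auto simp: dist_commute)
  have "inj_on p ?B"
  proof (rule inj_onI, rule ccontr)
    fix n m
    assume "n \<in> ?B" "m \<in> ?B" "p n = p m" "n \<noteq> m"
    then show False
      using separated'[of n m] \<open>e > 0\<close> by simp
  qed
  moreover have "finite (p ` ?B)"
  proof (rule finite_if_separated_in_bounded)
    have "p ` ?B \<subseteq> D 0"
      using p_mem decseqD[OF \<open>decseq D\<close>, of 0] by blast
    then show "bounded (p ` ?B)"
      using \<open>bounded (D 0)\<close> bounded_subset by blast
  qed (use \<open>e > 0\<close> separated' in auto)
  ultimately show ?thesis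
    using finite_imageD by blast
qed

lemma eps_thin_if_subset_of_ball_free:
  assumes "\<nexists>x. ball x e \<subseteq> S" and "U \<subseteq> S"
  shows "eps_thin e U"
  using assms unfolding eps_thin_def by blast

lemma closed_top_disk_imp_compact: "closed_top_disk D \<Longrightarrow> compact D"
  unfolding closed_top_disk_def using compact_cball homeomorphic_compactness by blast

theorem mainTheorem19:
  fixes D :: "nat \<Rightarrow> (real^2) set" and e :: real
  assumes disks: "\<And>n. closed_top_disk (D n)"
    and nested: "\<And>n. D (Suc n) \<subseteq> D n"
    and epos: "e > 0"
  shows "\<exists>N. \<forall>n\<ge>N. \<forall>U\<in>components (D n - D (Suc n)). eps_thin e U"
proof -
  have "decseq D"
    using nested by (rule decseq_SucI)
  moreover have "bounded (D 0)"
    using disks closed_top_disk_imp_compact compact_imp_bounded by blast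
  ultimately have "finite {n. \<exists>x. ball x e \<subseteq> D n - D (Suc n)}"
    using epos by (rule finite_differences_containing_ball)
  then obtain N where N: "{n. \<exists>x. ball x e \<subseteq> D n - D (Suc n)} \<subseteq> {..<N}"
    using finite_nat_bounded by blast
  show ?thesis
  proof (intro exI allI impI ballI)
    fix n U
    assume "N \<le> n" and U: "U \<in> components (D n - D (Suc n))"
    then have "\<nexists>x. ball x e \<subseteq> D n - D (Suc n)"
      using N by fastforce
    then show "eps_thin e U"
      using in_components_subset[OF U] by (rule eps_thin_if_subset_of_ball_free)
  qed
qed

end
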